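(* Let $k$ be any field of characteristic $0$ (in particular $k=\mathbb R$), and let $\mathfrak m=\mathfrak m_{-1}\oplus\mathfrak m_{-2}$ be a non-degenerate graded nilpotent Lie algebra of depth $2$ over $k$, generated by $\mathfrak m_{-1}$, with $\dim\mathfrak m_{-2}=2$. Then the Tanaka prolongation of $\mathfrak m$ is infinite-dimensional.
   Context: A GNLA is a negatively graded Lie algebra $\mathfrak m=\bigoplus_{i\ge1}\mathfrak m_{-i}$ generated by $\mathfrak m_{-1}$; non-degenerate means $\mathfrak m_{-1}$ contains no non-zero central element. The Tanaka prolongation $\mathfrak g(\mathfrak m)$ is defined by $\mathfrak g_i(\mathfrak m)=\mathfrak m_i$ for $i<0$ and recursively, for $k\ge0$, $\mathfrak g_k(\mathfrak m)=\{\phi:\mathfrak m\to\bigoplus_{i<k}\mathfrak g_i(\mathfrak m)\text{ linear}\mid \phi(\mathfrak m_{-i})\subset\mathfrak g_{k-i}(\mathfrak m),\ \phi([x,y])=[\phi(x),y]+[x,\phi(y)]\ \forall x,y\in\mathfrak m\}$. *)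

theory Defs
  imports Complex_Main "HOL-Library.Function_Algebras"
begin

text \<open>A grading m = m_{-1} (+) m_{-2} is given by two
subspaces M1, M2.\<close>

definition is_lie_algebra :: "('k::field \<Rightarrow> 'a::ab_group_add \<Rightarrow> 'a) \<Rightarrow> ('a \<Rightarrow> 'a \<Rightarrow> 'a) \<Rightarrow> bool" where
  "is_lie_algebra sc br \<longleftrightarrow>
     vector_space sc \<and>
     (\<forall>x y z. br (x + y) z = br x z + br y z) \<and>
     (\<forall>x y z. br x (y + z) = br x y + br x z) \<and>
     (\<forall>c x y. br (sc c x) y = sc c (br x y)) \<and>
     (\<forall>c x y. br x (sc c y) = sc c (br x y)) \<and>
     (\<forall>x. br x x = 0) \<and>
     (\<forall>x y z. br x (br y z) + br y (br z x) + br z (br x y) = 0)"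

definition finite_dim :: "('k::field \<Rightarrow> 'a::ab_group_add \<Rightarrow> 'a) \<Rightarrow> bool" where
  "finite_dim sc \<longleftrightarrow> (\<exists>B. finite B \<and> module.span sc B = UNIV)"

definition depth2_gnla ::
  "('k::field \<Rightarrow> 'a::ab_group_add \<Rightarrow> 'a) \<Rightarrow> ('a \<Rightarrow> 'a \<Rightarrow> 'a) \<Rightarrow> 'a set \<Rightarrow> 'a set \<Rightarrow> bool" where
  "depth2_gnla sc br M1 M2 \<longleftrightarrow>
     is_lie_algebra sc br \<and> finite_dim sc \<and>
     module.subspace sc M1 \<and> module.subspace sc M2 \<and>
     M1 \<inter> M2 = {0} \<and> (\<forall>x. \<exists>a\<in>M1. \<exists>b\<in>M2. x = a + b) \<and>
     (\<forall>x\<in>M1. \<forall>y\<in>M1. br x y \<in> M2) \<and>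
     (\<forall>x\<in>M1. \<forall>y\<in>M2. br x y = 0) \<and>
     (\<forall>x\<in>M2. \<forall>y\<in>M2. br x y = 0) \<and>
     (\<forall>S. module.subspace sc S \<and> M1 \<subseteq> S \<and> (\<forall>x\<in>S. \<forall>y\<in>S. br x y \<in> S) \<longrightarrow> S = UNIV)"

definition non_degenerate :: "('a::zero \<Rightarrow> 'a \<Rightarrow> 'a) \<Rightarrow> 'a set \<Rightarrow> bool" where
  "non_degenerate br M1 \<longleftrightarrow> (\<forall>x\<in>M1. (\<forall>y. br x y = 0) \<longrightarrow> x = 0)"

text \<open>Every element u of g_d (any degree d)
is represented by the function  xs = [x1,...,xr]  \<mapsto>  the m-component of
[...[[u,x1],x2],...,xr].  For u in m this is the iterated bracket (adl); for
u = phi in g_d, d \<ge> 0, it is F [] = 0 and F (x # xs) = (representation of phi x) xs.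
This is an injective linear embedding of the direct sum of the g_d into 'a list \<Rightarrow> 'a.\<close>

fun adl :: "('a \<Rightarrow> 'a \<Rightarrow> 'a) \<Rightarrow> 'a \<Rightarrow> 'a list \<Rightarrow> 'a" where
  "adl br a [] = a"
| "adl br a (x # xs) = adl br (br a x) xs"

text \<open>tanaka sc br M1 M2 n is (the representation of) g_{n-2}(m).\<close>

fun tanaka :: "('k \<Rightarrow> 'a::ab_group_add \<Rightarrow> 'a) \<Rightarrow> ('a \<Rightarrow> 'a \<Rightarrow> 'a) \<Rightarrow> 'a set \<Rightarrow> 'a set \<Rightarrow> nat
               \<Rightarrow> ('a list \<Rightarrow> 'a) set" where
  "tanaka sc br M1 M2 0 = {adl br a | a. a \<in> M2}"
| "tanaka sc br M1 M2 (Suc 0) = {adl br a | a. a \<in> M1}"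
| "tanaka sc br M1 M2 (Suc (Suc n)) =
     {F. F [] = 0 \<and>
         (\<forall>x y xs. F ((x + y) # xs) = F (x # xs) + F (y # xs)) \<and>
         (\<forall>c x xs. F (sc c x # xs) = sc c (F (x # xs))) \<and>
         (\<forall>x\<in>M1. (\<lambda>xs. F (x # xs)) \<in> tanaka sc br M1 M2 (Suc n)) \<and>
         (\<forall>x\<in>M2. (\<lambda>xs. F (x # xs)) \<in> tanaka sc br M1 M2 n) \<and>
         (\<forall>x y xs. F (br x y # xs) = F (x # y # xs) - F (y # x # xs))}"

definition scale_fun :: "('k \<Rightarrow> 'a \<Rightarrow> 'a) \<Rightarrow> 'k \<Rightarrow> ('b \<Rightarrow> 'a) \<Rightarrow> ('b \<Rightarrow> 'a)" where
  "scale_fun sc c F = (\<lambda>xs. sc c (F xs))"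

text \<open>The full Tanaka prolongation g(m) = (+)_d g_d (degrees below -2 are zero).\<close>

definition tanaka_prolongation :: "('k::field \<Rightarrow> 'a::ab_group_add \<Rightarrow> 'a) \<Rightarrow> ('a \<Rightarrow> 'a \<Rightarrow> 'a) \<Rightarrow> 'a set \<Rightarrow> 'a set
               \<Rightarrow> ('a list \<Rightarrow> 'a) set" where
  "tanaka_prolongation sc br M1 M2 = module.span (scale_fun sc) (\<Union>n. tanaka sc br M1 M2 n)"

definition infinite_dimensional :: "('k::field \<Rightarrow> 'b::ab_group_add \<Rightarrow> 'b) \<Rightarrow> 'b set \<Rightarrow> bool" where
  "infinite_dimensional sc V \<longleftrightarrow> \<not> (\<exists>B. finite B \<and> V \<subseteq> module.span sc B)"

end

theory Submission
  imports Defs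
begin

text \<open>
  Proof idea.  Choose a basis e1, e2 of m_{-2}; then [x,y] = omega1(x,y) e1 + omega2(x,y) e2
  for two skew forms omega1, omega2 that vanish as soon as one argument lies in m_{-2}.

  Call a pair (U, T) a prolongation datum if U is a subspace of m_{-1} and T is a
  bilinear action (x, u) \<mapsto> T x u of m on U by pairwise commuting operators, killing
  m_{-2}, with the symmetry [T x u, y] = [T y u, x].  For such a datum and u in U the
  maps  (x1,...,xn,y) \<mapsto> [T xn ... T x1 u, y]  are derivations of every degree, i.e.
  elements of g_{n-1}(m).  If some iterate T x0^n u0 never vanishes, then these
  elements are separated by evaluation on the words x0^n, hence linearly independent,
  and the prolongation is infinite-dimensional.

  A datum with this non-vanishing property always exists:
  (a) if omega1 is degenerate on m_{-1} with kernel vector v, take U = span {v} and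
      T x u = omega2(v,x) u (non-degeneracy of m makes omega2(v,-) non-zero);
  (b) if omega1 is non-degenerate, let A be the operator on m_{-1} with
      omega1(A v, y) = omega2(v, y) and K the algebra of polynomials in A.  On a minimal
      non-zero A-invariant subspace U the commutative algebra K acts by a division
      algebra (Schur), so for each x there is a unique P_x in K with
      omega1(P_x u, z0) = omega1(u, x) on U; T x u = P_x u is the required datum.
\<close>

text \<open>A field is a module over itself, so linear functionals can be treated as module
  homomorphisms into the scalars and the library's span arguments apply to them.\<close>

lemma module_field_itself: "module ((*) :: 'k::field \<Rightarrow> 'k \<Rightarrow> 'k)"
  by unfold_locales (simp_all add: algebra_simps)

lemma sum_fun_apply: "(sum f A) x = sum (\<lambda>a. f a x) A"
  by (induction A rule: infinite_finite_induct) auto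

context vector_space
begin

lemma linear_functionalI:
  assumes "\<And>x y. f (x + y) = f x + f y" and "\<And>c x. f (scale c x) = c * f x"
  shows "module_hom scale (*) f"
  using assms module_axioms module_field_itself by (simp add: module_hom_iff)

lemma zero_functional: "module_hom scale (*) (\<lambda>_. 0)"
  by (rule linear_functionalI) simp_all

lemma functional_eq_on_span:
  assumes "module_hom scale (*) f" "module_hom scale (*) h"
    and "\<And>b. b \<in> B \<Longrightarrow> f b = h b" and "y \<in> span B"
  shows "f y = h y"
  by (rule module_pair.module_hom_eq_on_span[OF _ assms])
    (intro module_pair.intro module_axioms module_field_itself)

lemma vector_space_scale_fun: "vector_space (scale_fun scale)"
  unfolding vector_space_def module_def scale_fun_def
  by (auto simp: fun_eq_iff scale_right_distrib scale_left_distrib)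

lemma independent_diagonal_family:
  fixes G :: "nat \<Rightarrow> 'c \<Rightarrow> 'b" and p :: "nat \<Rightarrow> 'c"
  assumes off_diag: "\<And>i j. i \<noteq> j \<Longrightarrow> G j (p i) = 0" and diag: "\<And>i. G i (p i) \<noteq> 0"
  shows "inj G" and "\<not> module.dependent (scale_fun scale) (range G)"
proof -
  interpret F: vector_space "scale_fun scale" by (rule vector_space_scale_fun)
  show "inj G"
    by (rule injI) (metis diag off_diag)
  show "F.independent (range G)"
    unfolding F.independent_explicit_finite_subsets
  proof (intro allI impI ballI)
    fix S u v
    assume S: "S \<subseteq> range G" "finite S" and v: "v \<in> S"
      and sum0: "(\<Sum>v\<in>S. scale_fun scale (u v) v) = 0"
    obtain i where vi: "v = G i" using S v by auto
    have others: "w (p i) = 0" if w: "w \<in> S - {v}" for w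
    proof -
      obtain j where "w = G j" using w S(1) by auto
      then show ?thesis using w vi off_diag[of i j] by auto
    qed
    have "0 = (\<Sum>w\<in>S. scale (u w) (w (p i)))"
      using fun_cong[OF sum0, of "p i"] by (simp add: sum_fun_apply scale_fun_def)
    also have "\<dots> = scale (u v) (v (p i))"
      using others by (simp add: sum.remove[OF S(2) v] sum.neutral)
    finally show "u v = 0" using diag vi by simp
  qed
qed

lemma infinite_dimensional_diagonal_family:
  fixes G :: "nat \<Rightarrow> 'c \<Rightarrow> 'b" and p :: "nat \<Rightarrow> 'c"
  assumes "\<And>i j. i \<noteq> j \<Longrightarrow> G j (p i) = 0" and "\<And>i. G i (p i) \<noteq> 0" and "range G \<subseteq> V"
  shows "infinite_dimensional (scale_fun scale) V"
  unfolding infinite_dimensional_def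
proof
  interpret F: vector_space "scale_fun scale" by (rule vector_space_scale_fun)
  assume "\<exists>B. finite B \<and> V \<subseteq> F.span B"
  then obtain B where B: "finite B" "V \<subseteq> F.span B" by blast
  have inj: "inj G" and indep: "F.independent (range G)"
    using independent_diagonal_family assms(1,2) by blast+
  have "F.independent (G ` {..card B})"
    by (rule F.independent_mono[OF indep]) auto
  moreover have "G ` {..card B} \<subseteq> F.span B" using assms(3) B(2) by auto
  ultimately have "card (G ` {..card B}) \<le> card B"
    using F.independent_span_bound[OF B(1)] by blast
  moreover have "card (G ` {..card B}) = Suc (card B)"
    using card_image[OF inj_on_subset[OF inj]] by simp
  ultimately show False by simp
qed

end

context finite_dimensional_vector_space
begin

text \<open>Solvability of a square linear system: if the functionals x \<mapsto> g x b, indexed by a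
  finite basis Bs of a subspace S, have no common zero on S apart from 0, then they
  attain any prescribed values f b at a single point of S (dimension count).\<close>

lemma solve_dual_system:
  assumes S: "subspace S" and Bs: "finite Bs" "Bs \<subseteq> S" "independent Bs" "span Bs = S"
    and g_lin: "\<And>b. b \<in> Bs \<Longrightarrow> module_hom scale (*) (\<lambda>x. g x b)"
    and g_inj: "\<And>u. u \<in> S \<Longrightarrow> (\<forall>b\<in>Bs. g u b = 0) \<Longrightarrow> u = 0"
  shows "\<exists>u\<in>S. \<forall>b\<in>Bs. g u b = f b"
proof -
  define L where "L x = (\<Sum>b\<in>Bs. scale (g x b) b)" for x
  have g_add: "g (x + y) b = g x b + g y b" and g_scale: "g (scale c x) b = c * g x b"
    if "b \<in> Bs" for b x y c
    using module_hom.add[OF g_lin[OF that]] module_hom.scale[OF g_lin[OF that]] by auto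
  interpret L: module_hom scale scale L
    unfolding module_hom_iff
    by (auto simp: module_axioms L_def g_add g_scale scale_left_distrib sum.distrib
        scale_sum_right intro!: sum.cong)
  have inj_L: "inj_on L (span Bs)"
    unfolding L.inj_on_iff_eq_0[OF subspace_span]
  proof (intro ballI impI)
    fix x assume x: "x \<in> span Bs" "L x = 0"
    have "\<forall>b\<in>Bs. g x b = 0"
      using independentD[OF Bs(3) Bs(1) subset_refl, of "\<lambda>b. g x b"] x(2) by (auto simp: L_def)
    then show "x = 0" using g_inj x(1) Bs(4) by auto
  qed
  have L_Bs_basis: "S \<subseteq> span (L ` Bs)"
  proof -
    have "independent (L ` Bs)" by (rule L.independent_injective_image[OF Bs(3) inj_L])
    moreover have "card (L ` Bs) = dim S"
      using card_image[OF inj_on_subset[OF inj_L span_superset]] basis_card_eq_dim[of Bs S] Bs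
      by simp
    moreover have "L ` Bs \<subseteq> S"
    proof -
      have "L x \<in> span Bs" for x unfolding L_def by (intro span_sum span_scale span_base)
      then show ?thesis using Bs(4) by auto
    qed
    ultimately show ?thesis using card_eq_dim Bs(1) by blast
  qed
  have "(\<Sum>b\<in>Bs. scale (f b) b) \<in> S"
    unfolding Bs(4)[symmetric] by (rule span_sum, rule span_scale, rule span_base) simp
  then obtain x where x: "x \<in> span Bs" "L x = (\<Sum>b\<in>Bs. scale (f b) b)"
    using L_Bs_basis unfolding L.span_image by auto
  have "(\<Sum>b\<in>Bs. scale (g x b - f b) b) = L x - (\<Sum>b\<in>Bs. scale (f b) b)"
    by (simp add: L_def scale_left_diff_distrib sum_subtractf)
  also have "\<dots> = 0" using x(2) by simp
  finally have "\<forall>b\<in>Bs. g x b - f b = 0"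
    using independentD[OF Bs(3) Bs(1) subset_refl, of "\<lambda>b. g x b - f b"] by auto
  then show ?thesis using x(1) Bs(4) by auto
qed

end

text \<open>The standing hypotheses of the theorem.\<close>

locale depth2_gnla_dim2 =
  fixes sc :: "'k::field \<Rightarrow> 'a::ab_group_add \<Rightarrow> 'a"
    and br :: "'a \<Rightarrow> 'a \<Rightarrow> 'a"
    and M1 M2 :: "'a set"
  assumes gnla: "depth2_gnla sc br M1 M2"
    and nondeg: "non_degenerate br M1"
    and dim_M2: "vector_space.dim sc M2 = 2"
begin

lemma lie_algebra: "is_lie_algebra sc br"
  using gnla by (simp add: depth2_gnla_def)

lemma vector_space_sc: "vector_space sc"
  using lie_algebra by (simp add: is_lie_algebra_def)

text \<open>A fixed finite basis of m, so that the finite-dimensional linear algebra of the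
  library is available for sc.\<close>

definition basis_m :: "'a set" where
  "basis_m = (SOME B. finite B \<and> \<not> module.dependent sc B \<and> module.span sc B = UNIV)"

lemma basis_m: "finite basis_m \<and> \<not> module.dependent sc basis_m \<and> module.span sc basis_m = UNIV"
proof -
  interpret vector_space sc by (rule vector_space_sc)
  obtain B0 where B0: "finite B0" "span B0 = UNIV"
    using gnla by (auto simp: depth2_gnla_def finite_dim_def)
  obtain B where B: "independent B" "UNIV \<subseteq> span B"
    using basis_exists[of UNIV] by blast
  have "finite B" using independent_span_bound[OF B0(1) B(1)] B0(2) by auto
  then have "\<exists>B. finite B \<and> independent B \<and> span B = UNIV" using B by auto
  then show ?thesis unfolding basis_m_def by (rule someI_ex)
qed

sublocale finite_dimensional_vector_space sc basis_m
  by (rule finite_dimensional_vector_space.intro[OF vector_space_sc])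
    (unfold_locales, use basis_m in auto)

lemma br_add_l: "br (x + y) z = br x z + br y z"
  and br_add_r: "br x (y + z) = br x y + br x z"
  and br_scale_l: "br (sc c x) y = sc c (br x y)"
  and br_scale_r: "br x (sc c y) = sc c (br x y)"
  and br_self: "br x x = 0"
  using lie_algebra by (simp_all add: is_lie_algebra_def)

lemma br_zero_l [simp]: "br 0 y = 0"
  using br_add_l[of 0 0 y] by simp

lemma br_zero_r [simp]: "br y 0 = 0"
  using br_add_r[of y 0 0] by simp

lemma br_skew: "br x y = - br y x"
proof -
  have "0 = br (x + y) (x + y)" by (simp add: br_self)
  also have "\<dots> = br x y + br y x" by (simp only: br_add_l br_add_r) (simp add: br_self)
  finally show ?thesis by (simp add: eq_neg_iff_add_eq_0)
qed

lemma sub_M1: "subspace M1" and sub_M2: "subspace M2"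
  and decomp: "\<exists>a\<in>M1. \<exists>b\<in>M2. x = a + b"
  and br_M1_M1: "x \<in> M1 \<Longrightarrow> y \<in> M1 \<Longrightarrow> br x y \<in> M2"
  and br_M1_M2: "x \<in> M1 \<Longrightarrow> y \<in> M2 \<Longrightarrow> br x y = 0"
  and br_M2_M2: "x \<in> M2 \<Longrightarrow> y \<in> M2 \<Longrightarrow> br x y = 0"
  using gnla by (auto simp: depth2_gnla_def)

lemma central_l: "z \<in> M2 \<Longrightarrow> br z y = 0"
proof -
  assume z: "z \<in> M2"
  obtain a b where "a \<in> M1" "b \<in> M2" "y = a + b" using decomp by blast
  with z show ?thesis
    by (simp add: br_add_r br_M2_M2) (metis br_M1_M2 br_skew neg_equal_0_iff_equal)
qed

lemma central_r: "z \<in> M2 \<Longrightarrow> br y z = 0"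
  using central_l br_skew by (metis neg_equal_0_iff_equal)

lemma br_in_M2: "br x y \<in> M2"
proof -
  obtain a b where ab: "a \<in> M1" "b \<in> M2" "x = a + b" using decomp by blast
  obtain c d where cd: "c \<in> M1" "d \<in> M2" "y = c + d" using decomp by blast
  have "br x y = br a c" using ab cd by (simp add: br_add_l br_add_r central_l central_r)
  then show ?thesis using ab cd br_M1_M1 by simp
qed

lemma adl_add: "adl br (a + b) xs = adl br a xs + adl br b xs"
  by (induction xs arbitrary: a b) (simp_all add: br_add_l)

lemma adl_scale: "adl br (sc c a) xs = sc c (adl br a xs)"
  by (induction xs arbitrary: a) (simp_all add: br_scale_l)

lemma adl_zero [simp]: "adl br 0 xs = 0"
  by (induction xs) simp_all

lemma adl_M2_nonempty: "a \<in> M2 \<Longrightarrow> xs \<noteq> [] \<Longrightarrow> adl br a xs = 0"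
  by (induction xs) (simp_all add: central_l)

lemma adl_long: "2 \<le> length xs \<Longrightarrow> adl br a xs = 0"
  by (cases xs) (auto intro: adl_M2_nonempty[OF br_in_M2])

lemma zero_in_tanaka: "(\<lambda>_. 0) \<in> tanaka sc br M1 M2 n"
proof (induction n rule: less_induct)
  case (less n)
  consider "n = 0" | "n = Suc 0" | k where "n = Suc (Suc k)"
    by (metis not0_implies_Suc)
  then show ?case
  proof cases
    case 1
    then show ?thesis using subspace_0[OF sub_M2] by (auto simp: fun_eq_iff intro!: exI[of _ 0])
  next
    case 2
    then show ?thesis using subspace_0[OF sub_M1] by (auto simp: fun_eq_iff intro!: exI[of _ 0])
  next
    case 3
    then show ?thesis using less by simp
  qed
qed

end

locale prolongation_datum = depth2_gnla_dim2 sc br M1 M2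
  for sc :: "'k::field \<Rightarrow> 'a::ab_group_add \<Rightarrow> 'a" and br M1 M2 +
  fixes U :: "'a set" and T :: "'a \<Rightarrow> 'a \<Rightarrow> 'a"
  assumes U_subspace: "module.subspace sc U"
    and U_sub_M1: "U \<subseteq> M1"
    and T_closed: "u \<in> U \<Longrightarrow> T x u \<in> U"
    and T_add_r: "u \<in> U \<Longrightarrow> v \<in> U \<Longrightarrow> T x (u + v) = T x u + T x v"
    and T_scale_r: "u \<in> U \<Longrightarrow> T x (sc c u) = sc c (T x u)"
    and T_add_l: "u \<in> U \<Longrightarrow> T (x + y) u = T x u + T y u"
    and T_scale_l: "u \<in> U \<Longrightarrow> T (sc c x) u = sc c (T x u)"
    and T_M2: "u \<in> U \<Longrightarrow> z \<in> M2 \<Longrightarrow> T z u = 0"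
    and T_comm: "u \<in> U \<Longrightarrow> T x (T y u) = T y (T x u)"
    and T_sym: "u \<in> U \<Longrightarrow> br (T x u) y = br (T y u) x"
begin

lemma T_zero: "T x 0 = 0"
  using T_add_r[of 0 0 x] subspace_0[OF U_subspace] by simp

text \<open>chain n u represents the element of g_{n-1} that sends x1, ..., xn to
  T xn (... (T x1 u)) and x1, ..., xn, y to the bracket of that vector with y.\<close>

fun chain :: "nat \<Rightarrow> 'a \<Rightarrow> 'a list \<Rightarrow> 'a" where
  "chain 0 u xs = adl br u xs"
| "chain (Suc n) u [] = 0"
| "chain (Suc n) u (x # ys) = chain n (T x u) ys"

lemma chain_add: "u \<in> U \<Longrightarrow> v \<in> U \<Longrightarrow> chain n (u + v) xs = chain n u xs + chain n v xs"
proof (induction n arbitrary: u v xs)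
  case 0
  then show ?case by (simp add: adl_add)
next
  case (Suc n)
  then show ?case by (cases xs) (simp_all add: T_add_r T_closed)
qed

lemma chain_scale: "u \<in> U \<Longrightarrow> chain n (sc c u) xs = sc c (chain n u xs)"
proof (induction n arbitrary: u xs)
  case 0
  then show ?case by (simp add: adl_scale)
next
  case (Suc n)
  then show ?case by (cases xs) (simp_all add: T_scale_r T_closed)
qed

lemma chain_zero: "chain n 0 xs = 0"
proof (induction n arbitrary: xs)
  case (Suc n)
  then show ?case by (cases xs) (simp_all add: T_zero)
qed simp

text \<open>Swapping the first two arguments does not change a chain; in degree one this is
  exactly the symmetry of T, in higher degree the commutativity of the T x.\<close>

lemma chain_swap: "u \<in> U \<Longrightarrow> chain n (T x u) (y # xs) = chain n (T y u) (x # xs)"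
  by (cases n) (simp_all add: T_sym T_comm)

lemma chain_in_tanaka: "u \<in> U \<Longrightarrow> chain n u \<in> tanaka sc br M1 M2 (Suc n)"
proof (induction n arbitrary: u)
  case 0
  then show ?case using U_sub_M1 by (auto simp: fun_eq_iff)
next
  case (Suc n)
  have zero: "chain n 0 = (\<lambda>_. 0)" by (simp add: fun_eq_iff chain_zero)
  show ?case unfolding tanaka.simps mem_Collect_eq
  proof (intro conjI allI ballI)
    show "chain (Suc n) u [] = 0" by simp
    show "chain (Suc n) u ((x + y) # xs) = chain (Suc n) u (x # xs) + chain (Suc n) u (y # xs)"
      for x y xs
      using Suc.prems by (simp add: T_add_l T_closed chain_add)
    show "chain (Suc n) u (sc c x # xs) = sc c (chain (Suc n) u (x # xs))" for c x xs
      using Suc.prems by (simp add: T_scale_l T_closed chain_scale)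
    show "(\<lambda>xs. chain (Suc n) u (x # xs)) \<in> tanaka sc br M1 M2 (Suc n)" if "x \<in> M1" for x
      using Suc.IH[of "T x u"] Suc.prems T_closed by simp
    show "(\<lambda>xs. chain (Suc n) u (x # xs)) \<in> tanaka sc br M1 M2 n" if "x \<in> M2" for x
      using T_M2[OF Suc.prems that] zero zero_in_tanaka by simp
    show "chain (Suc n) u (br x y # xs)
        = chain (Suc n) u (x # y # xs) - chain (Suc n) u (y # x # xs)" for x y xs
      using T_M2[OF Suc.prems br_in_M2] chain_swap[OF Suc.prems] by (simp add: chain_zero)
  qed
qed

lemma chain_support: "length xs \<noteq> n \<Longrightarrow> length xs \<noteq> Suc n \<Longrightarrow> chain n u xs = 0"
proof (induction n arbitrary: u xs)
  case 0
  then have "2 \<le> length xs" by linarith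
  then show ?case by (simp add: adl_long)
next
  case (Suc n)
  then show ?case by (cases xs) simp_all
qed

lemma chain_replicate: "chain n u (replicate n x) = (T x ^^ n) u"
  by (induction n arbitrary: u) (simp_all add: funpow_swap1)

text \<open>If some iterate T x0^n u0 never vanishes, the chains of even degree through u0 are
  separated by the words x0^(2j), so the prolongation is infinite-dimensional.\<close>

theorem infinite_dimensional_if_nonvanishing:
  assumes u0: "u0 \<in> U" and nonvanishing: "\<And>n. (T x0 ^^ n) u0 \<noteq> 0"
  shows "infinite_dimensional (scale_fun sc) (tanaka_prolongation sc br M1 M2)"
proof (rule infinite_dimensional_diagonal_family)
  interpret F: vector_space "scale_fun sc" by (rule vector_space_scale_fun)
  show "chain (2 * j) u0 (replicate (2 * i) x0) = 0" if "i \<noteq> j" for i j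
    using that chain_support by simp
  show "chain (2 * i) u0 (replicate (2 * i) x0) \<noteq> 0" for i
    using nonvanishing by (simp add: chain_replicate)
  show "range (\<lambda>j. chain (2 * j) u0) \<subseteq> tanaka_prolongation sc br M1 M2"
    unfolding tanaka_prolongation_def using chain_in_tanaka[OF u0] by (auto intro: F.span_base)
qed

end

context depth2_gnla_dim2
begin

definition basis_M2 :: "'a \<times> 'a" where
  "basis_M2 = (SOME p. fst p \<in> M2 \<and> snd p \<in> M2 \<and> fst p \<noteq> snd p \<and>
                       independent {fst p, snd p} \<and> span {fst p, snd p} = M2)"

definition e1 :: 'a where "e1 = fst basis_M2"
definition e2 :: 'a where "e2 = snd basis_M2"

lemma basis_M2: "e1 \<in> M2" "e2 \<in> M2" "e1 \<noteq> e2" "independent {e1, e2}" "span {e1, e2} = M2"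
proof -
  obtain B where B: "finite B" "B \<subseteq> M2" "independent B" "span B = M2" "card B = dim M2"
    using basis_subspace_exists[OF sub_M2] by blast
  then obtain a b where ab: "B = {a, b}" "a \<noteq> b" using dim_M2 by (auto simp: card_2_iff)
  have "\<exists>p. fst p \<in> M2 \<and> snd p \<in> M2 \<and> fst p \<noteq> snd p \<and>
            independent {fst p, snd p} \<and> span {fst p, snd p} = M2"
    using B ab by (intro exI[of _ "(a, b)"]) auto
  then show "e1 \<in> M2" "e2 \<in> M2" "e1 \<noteq> e2" "independent {e1, e2}" "span {e1, e2} = M2"
    unfolding e1_def e2_def basis_M2_def by (metis (mono_tags, lifting) someI_ex)+
qed

definition omega1 :: "'a \<Rightarrow> 'a \<Rightarrow> 'k" where
  "omega1 x y = representation {e1, e2} (br x y) e1"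

definition omega2 :: "'a \<Rightarrow> 'a \<Rightarrow> 'k" where
  "omega2 x y = representation {e1, e2} (br x y) e2"

lemma br_in_span: "br x y \<in> span {e1, e2}"
  using basis_M2 br_in_M2 by simp

lemma br_omega: "br x y = sc (omega1 x y) e1 + sc (omega2 x y) e2"
proof -
  have "br x y = (\<Sum>b\<in>{e1, e2}. sc (representation {e1, e2} (br x y) b) b)"
    using sum_representation_eq[of "{e1, e2}" "br x y" "{e1, e2}"] basis_M2 br_in_span by simp
  then show ?thesis using basis_M2 by (simp add: omega1_def omega2_def)
qed

lemma omega_add_l:
  "omega1 (x + y) z = omega1 x z + omega1 y z" "omega2 (x + y) z = omega2 x z + omega2 y z"
  using representation_add[of "{e1, e2}" "br y z" "br x z"] basis_M2 br_in_span
  by (auto simp: omega1_def omega2_def br_add_l)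

lemma omega_add_r:
  "omega1 z (x + y) = omega1 z x + omega1 z y" "omega2 z (x + y) = omega2 z x + omega2 z y"
  using representation_add[of "{e1, e2}" "br z y" "br z x"] basis_M2 br_in_span
  by (auto simp: omega1_def omega2_def br_add_r)

lemma omega_scale_l: "omega1 (sc c x) z = c * omega1 x z" "omega2 (sc c x) z = c * omega2 x z"
  using representation_scale[of "{e1, e2}" "br x z" c] basis_M2 br_in_span
  by (auto simp: omega1_def omega2_def br_scale_l)

lemma omega_scale_r: "omega1 z (sc c x) = c * omega1 z x" "omega2 z (sc c x) = c * omega2 z x"
  using representation_scale[of "{e1, e2}" "br z x" c] basis_M2 br_in_span
  by (auto simp: omega1_def omega2_def br_scale_r)

lemma omega_central: "z \<in> M2 \<Longrightarrow> omega1 x z = 0" "z \<in> M2 \<Longrightarrow> omega2 x z = 0"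
  by (simp_all add: omega1_def omega2_def central_r representation_zero)

lemma omega_zero_l [simp]: "omega1 0 z = 0" "omega2 0 z = 0"
  by (simp_all add: omega1_def omega2_def representation_zero)

lemma omega_diff_l: "omega1 (x - y) z = omega1 x z - omega1 y z"
  using omega_add_l(1)[of "x - y" y z] by simp

lemma omega_linear_r: "module_hom sc (*) (omega1 x)" "module_hom sc (*) (omega2 x)"
  by (simp_all add: linear_functionalI omega_add_r omega_scale_r)

lemma omega1_linear_l: "module_hom sc (*) (\<lambda>y. omega1 y x)"
  by (simp add: linear_functionalI omega_add_l omega_scale_l)

text \<open>Case (a): omega1 has a non-zero kernel vector v in m_{-1}.  Then [v, y] = omega2(v,y) e2
  and the line spanned by v, acted on by the scalars omega2(v,x), is a prolongation datum
  whose iterates do not vanish because omega2(v,-) is non-zero by non-degeneracy.\<close>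

lemma degenerate_datum:
  assumes v: "v \<in> M1" "v \<noteq> 0" and kernel: "\<And>y. y \<in> M1 \<Longrightarrow> omega1 v y = 0"
  shows "prolongation_datum sc br M1 M2 (span {v}) (\<lambda>x u. sc (omega2 v x) u)"
    and "\<exists>x0. \<forall>n. ((\<lambda>u. sc (omega2 v x0) u) ^^ n) v \<noteq> 0"
proof -
  have kernel_all: "omega1 v y = 0" for y
  proof -
    obtain a b where "a \<in> M1" "b \<in> M2" "y = a + b" using decomp by blast
    then show ?thesis using kernel omega_central by (simp add: omega_add_r)
  qed
  have br_v: "br v y = sc (omega2 v y) e2" for y
    using br_omega[of v y] kernel_all by simp
  show "prolongation_datum sc br M1 M2 (span {v}) (\<lambda>x u. sc (omega2 v x) u)"
  proof (intro prolongation_datum.intro depth2_gnla_dim2_axioms prolongation_datum_axioms.intro)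
    show "span {v} \<subseteq> M1" using v sub_M1 by (simp add: span_minimal)
    show "br (sc (omega2 v x) u) y = br (sc (omega2 v y) u) x" if u: "u \<in> span {v}" for x y u
    proof -
      obtain c where "u = sc c v" using u by (auto simp: span_singleton)
      then show ?thesis by (simp add: br_scale_l br_v mult.commute mult.left_commute)
    qed
  qed (auto simp: span_scale scale_right_distrib scale_left_distrib mult.commute
        omega_add_r omega_scale_r omega_central)
  obtain y0 where "br v y0 \<noteq> 0" using nondeg v unfolding non_degenerate_def by blast
  then have y0: "omega2 v y0 \<noteq> 0" using br_v by auto
  have "((\<lambda>u. sc (omega2 v y0) u) ^^ n) v = sc (omega2 v y0 ^ n) v" for n
    by (induction n) (simp_all add: mult.commute)
  then show "\<exists>x0. \<forall>n. ((\<lambda>u. sc (omega2 v x0) u) ^^ n) v \<noteq> 0"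
    using y0 v by (intro exI[of _ y0]) simp
qed

end

context depth2_gnla_dim2
begin

text \<open>m_{-1} is non-zero, since it generates m and m_{-2} is two-dimensional.\<close>

lemma M1_nonzero: "M1 \<noteq> {0}"
proof
  assume M1: "M1 = {0}"
  have "\<forall>S. subspace S \<and> M1 \<subseteq> S \<and> (\<forall>x\<in>S. \<forall>y\<in>S. br x y \<in> S) \<longrightarrow> S = UNIV"
    using gnla unfolding depth2_gnla_def by blast
  then have "{0} = (UNIV :: 'a set)" using M1 by simp
  then have "e1 = 0" "e2 = 0" by auto
  then show False using basis_M2(3) by simp
qed

text \<open>Case (b), omega1 non-degenerate on m_{-1}.  Aop is the operator A defined by
  omega1(A x, y) = omega2(x, y) for y in m_{-1}; Kpoly is the algebra of polynomials in A
  (as maps on m).\<close>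

definition Aop :: "'a \<Rightarrow> 'a" where
  "Aop x = (SOME x'. x' \<in> M1 \<and> (\<forall>y\<in>M1. omega1 x' y = omega2 x y))"

inductive_set Kpoly :: "('a \<Rightarrow> 'a) set" where
  K_id: "(\<lambda>x. x) \<in> Kpoly"
| K_A: "P \<in> Kpoly \<Longrightarrow> (\<lambda>x. Aop (P x)) \<in> Kpoly"
| K_add: "P \<in> Kpoly \<Longrightarrow> Q \<in> Kpoly \<Longrightarrow> (\<lambda>x. P x + Q x) \<in> Kpoly"
| K_scale: "P \<in> Kpoly \<Longrightarrow> (\<lambda>x. sc c (P x)) \<in> Kpoly"

definition A_invariant :: "'a set \<Rightarrow> bool" where
  "A_invariant S \<longleftrightarrow> subspace S \<and> S \<subseteq> M1 \<and> S \<noteq> {0} \<and> (\<forall>x\<in>S. Aop x \<in> S)"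

definition Umin :: "'a set" where
  "Umin = (SOME S. A_invariant S \<and> (\<forall>S'. A_invariant S' \<longrightarrow> dim S \<le> dim S'))"

definition w0 :: 'a where "w0 = (SOME w. w \<in> Umin \<and> w \<noteq> 0)"

definition z0 :: 'a where "z0 = (SOME z. z \<in> M1 \<and> omega1 w0 z \<noteq> 0)"

definition Px :: "'a \<Rightarrow> 'a \<Rightarrow> 'a" where
  "Px x = (SOME P. P \<in> Kpoly \<and> (\<forall>u\<in>Umin. omega1 (P u) z0 = omega1 u x))"

context
  assumes omega1_nondeg: "\<And>v. v \<in> M1 \<Longrightarrow> (\<forall>y\<in>M1. omega1 v y = 0) \<Longrightarrow> v = 0"
begin

lemma Aop_exists: "\<exists>x'\<in>M1. \<forall>y\<in>M1. omega1 x' y = omega2 x y"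
proof -
  obtain B where B: "finite B" "B \<subseteq> M1" "independent B" "span B = M1"
    using basis_subspace_exists[OF sub_M1] by metis
  have "\<exists>u\<in>M1. \<forall>b\<in>B. omega1 u b = omega2 x b"
  proof (rule solve_dual_system[OF sub_M1 B])
    show "module_hom sc (*) (\<lambda>u. omega1 u b)" for b
      by (rule omega1_linear_l)
    show "u = 0" if "u \<in> M1" "\<forall>b\<in>B. omega1 u b = 0" for u
    proof (rule omega1_nondeg[OF that(1)], intro ballI)
      fix y assume "y \<in> M1"
      then show "omega1 u y = 0"
        using functional_eq_on_span[OF omega_linear_r(1) zero_functional] that(2) B(4) by blast
    qed
  qed
  then obtain u where u: "u \<in> M1" "\<forall>b\<in>B. omega1 u b = omega2 x b" by blast
  have "\<forall>y\<in>M1. omega1 u y = omega2 x y"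
    using functional_eq_on_span[OF omega_linear_r] u(2) B(4) by blast
  then show ?thesis using u(1) by blast
qed

text \<open>Characteristic property of A, first on m_{-1}, then on all of m (both forms
  vanish against m_{-2}).\<close>

lemma Aop: "Aop x \<in> M1" "y \<in> M1 \<Longrightarrow> omega1 (Aop x) y = omega2 x y"
proof -
  have "\<exists>x'. x' \<in> M1 \<and> (\<forall>y\<in>M1. omega1 x' y = omega2 x y)" using Aop_exists[of x] by blast
  from someI_ex[OF this] show "Aop x \<in> M1" "y \<in> M1 \<Longrightarrow> omega1 (Aop x) y = omega2 x y"
    unfolding Aop_def by blast+
qed

lemma Aop_omega: "omega1 (Aop x) y = omega2 x y"
proof -
  obtain a b where "a \<in> M1" "b \<in> M2" "y = a + b" using decomp by blast
  then show ?thesis by (simp add: omega_add_r omega_central Aop)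
qed

text \<open>Non-degeneracy of omega1 identifies vectors of m_{-1} by their pairings, which makes
  A linear.\<close>

lemma omega1_injective:
  "a \<in> M1 \<Longrightarrow> b \<in> M1 \<Longrightarrow> (\<And>y. y \<in> M1 \<Longrightarrow> omega1 a y = omega1 b y) \<Longrightarrow> a = b"
  using omega1_nondeg[of "a - b"] subspace_diff[OF sub_M1] by (simp add: omega_diff_l)

lemma Aop_add: "Aop (x + y) = Aop x + Aop y"
  by (rule omega1_injective) (simp_all add: Aop subspace_add[OF sub_M1] omega_add_l)

lemma Aop_scale: "Aop (sc c x) = sc c (Aop x)"
  by (rule omega1_injective) (simp_all add: Aop subspace_scale[OF sub_M1] omega_scale_l)

lemma Aop_zero [simp]: "Aop 0 = 0"
  using Aop_scale[of 0 0] by simp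

lemma Kpoly_add: "P \<in> Kpoly \<Longrightarrow> P (x + y) = P x + P y"
proof (induction arbitrary: x y rule: Kpoly.induct)
  case (K_add P Q)
  then show ?case by (simp add: ac_simps)
qed (simp_all add: Aop_add scale_right_distrib)

lemma Kpoly_scale: "P \<in> Kpoly \<Longrightarrow> P (sc c x) = sc c (P x)"
proof (induction arbitrary: x rule: Kpoly.induct)
  case (K_scale P d)
  then show ?case by (simp add: mult.commute)
qed (simp_all add: Aop_scale scale_right_distrib)

lemma Kpoly_zero: "P \<in> Kpoly \<Longrightarrow> P 0 = 0"
  using Kpoly_scale[of P 0 0] by simp

lemma Kpoly_commute_A: "P \<in> Kpoly \<Longrightarrow> P (Aop x) = Aop (P x)"
  by (induction arbitrary: x rule: Kpoly.induct) (simp_all add: Aop_add Aop_scale)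

lemma Kpoly_commute: "P \<in> Kpoly \<Longrightarrow> Q \<in> Kpoly \<Longrightarrow> P (Q x) = Q (P x)"
  by (induction arbitrary: x rule: Kpoly.induct) (simp_all add: Kpoly_commute_A Kpoly_add Kpoly_scale)

lemma Kpoly_diff: "P \<in> Kpoly \<Longrightarrow> Q \<in> Kpoly \<Longrightarrow> (\<lambda>x. P x - Q x) \<in> Kpoly"
  using K_add[OF _ K_scale[of Q "-1"]] by simp

lemma Kpoly_invariant:
  "P \<in> Kpoly \<Longrightarrow> subspace S \<Longrightarrow> (\<forall>x\<in>S. Aop x \<in> S) \<Longrightarrow> x \<in> S \<Longrightarrow> P x \<in> S"
  by (induction arbitrary: x rule: Kpoly.induct) (simp_all add: subspace_add subspace_scale)

lemma Kpoly_functional: "P \<in> Kpoly \<Longrightarrow> module_hom sc (*) (\<lambda>y. omega1 (P y) z)"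
  by (simp add: linear_functionalI Kpoly_add Kpoly_scale omega_add_l omega_scale_l)

text \<open>A minimal non-zero A-invariant subspace exists (m_{-1} itself is one candidate).\<close>

lemma Umin: "A_invariant Umin" "A_invariant S \<Longrightarrow> dim Umin \<le> dim S"
proof -
  have "A_invariant M1"
    using sub_M1 M1_nonzero Aop by (simp add: A_invariant_def)
  then obtain S0 where S0: "A_invariant S0" "dim S0 = (LEAST d. \<exists>S. A_invariant S \<and> dim S = d)"
    using LeastI_ex[of "\<lambda>d. \<exists>S. A_invariant S \<and> dim S = d"] by blast
  then have "A_invariant S0 \<and> (\<forall>S'. A_invariant S' \<longrightarrow> dim S0 \<le> dim S')"
    by (auto intro: Least_le)
  then have "\<exists>S. A_invariant S \<and> (\<forall>S'. A_invariant S' \<longrightarrow> dim S \<le> dim S')"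
    by blast
  from someI_ex[OF this] show "A_invariant Umin" "A_invariant S \<Longrightarrow> dim Umin \<le> dim S"
    unfolding Umin_def by blast+
qed

lemma Umin_subspace: "subspace Umin" and Umin_sub_M1: "Umin \<subseteq> M1"
  and Umin_nonzero: "Umin \<noteq> {0}" and Umin_A_closed: "x \<in> Umin \<Longrightarrow> Aop x \<in> Umin"
  using Umin(1) unfolding A_invariant_def by blast+

lemma Umin_minimal: "A_invariant S \<Longrightarrow> S \<subseteq> Umin \<Longrightarrow> S = Umin"
  using subspace_dim_equal[of S Umin] Umin(2)[of S] Umin_subspace unfolding A_invariant_def by blast

lemma Kpoly_Umin: "P \<in> Kpoly \<Longrightarrow> x \<in> Umin \<Longrightarrow> P x \<in> Umin"
  using Kpoly_invariant Umin_subspace Umin_A_closed by blast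

text \<open>Schur's lemma: an element of Kpoly with a non-zero kernel vector in Umin vanishes on
  Umin, since its kernel in Umin is A-invariant.\<close>

lemma Kpoly_schur:
  assumes P: "P \<in> Kpoly" and u: "u \<in> Umin" "u \<noteq> 0" "P u = 0" and x: "x \<in> Umin"
  shows "P x = 0"
proof -
  let ?N = "{y \<in> Umin. P y = 0}"
  have "A_invariant ?N" unfolding A_invariant_def
  proof (intro conjI)
    show "subspace ?N"
      by (rule subspaceI)
        (use Umin_subspace P in \<open>auto simp: subspace_0 subspace_add subspace_scale
           Kpoly_add Kpoly_scale Kpoly_zero\<close>)
    show "?N \<subseteq> M1" using Umin_sub_M1 by auto
    show "?N \<noteq> {0}" using u by auto
    show "\<forall>y\<in>?N. Aop y \<in> ?N" using P Umin_A_closed by (simp add: Kpoly_commute_A)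
  qed
  then have "?N = Umin" by (rule Umin_minimal) auto
  then show "P x = 0" using x by auto
qed

text \<open>Kpoly acts transitively on the non-zero vectors of Umin: the orbit of u is a
  non-zero A-invariant subspace of Umin.\<close>

lemma Kpoly_transitive:
  assumes u: "u \<in> Umin" "u \<noteq> 0" and x: "x \<in> Umin"
  shows "\<exists>P\<in>Kpoly. P u = x"
proof -
  let ?W = "{P u | P. P \<in> Kpoly}"
  have "A_invariant ?W" unfolding A_invariant_def
  proof (intro conjI)
    show "subspace ?W"
    proof (rule subspaceI)
      show "0 \<in> ?W" using K_scale[OF K_id, of 0] by force
      show "a + b \<in> ?W" if "a \<in> ?W" "b \<in> ?W" for a b
        using that K_add by fastforce
      show "sc c a \<in> ?W" if "a \<in> ?W" for c a
        using that K_scale by fastforce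
    qed
    show "?W \<subseteq> M1" using Kpoly_Umin u Umin_sub_M1 by blast
    show "?W \<noteq> {0}" using u K_id by force
    show "\<forall>y\<in>?W. Aop y \<in> ?W" using K_A by fastforce
  qed
  moreover have "?W \<subseteq> Umin" using Kpoly_Umin u by blast
  ultimately have "?W = Umin" by (rule Umin_minimal)
  then have "x \<in> ?W" using x by simp
  then show ?thesis by blast
qed

lemma w0: "w0 \<in> Umin" "w0 \<noteq> 0"
proof -
  have "\<exists>w. w \<in> Umin \<and> w \<noteq> 0" using Umin_subspace Umin_nonzero subspace_0 by blast
  from someI_ex[OF this] show "w0 \<in> Umin" "w0 \<noteq> 0" unfolding w0_def by blast+
qed

lemma z0: "z0 \<in> M1" "omega1 w0 z0 \<noteq> 0"
proof -
  have "\<exists>z. z \<in> M1 \<and> omega1 w0 z \<noteq> 0" using omega1_nondeg[of w0] w0 Umin_sub_M1 by blast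
  from someI_ex[OF this] show "z0 \<in> M1" "omega1 w0 z0 \<noteq> 0" unfolding z0_def by blast+
qed

text \<open>An element P of Kpoly is determined on Umin by the functional omega1(P -, z0):
  if it vanishes, P kills Umin (otherwise some Q in Kpoly maps P w0 back to w0, and
  then omega1(w0, z0) = omega1(P (Q w0), z0) = 0).\<close>

lemma Kpoly_vanishing:
  assumes P: "P \<in> Kpoly" and h: "\<And>u. u \<in> Umin \<Longrightarrow> omega1 (P u) z0 = 0" and x: "x \<in> Umin"
  shows "P x = 0"
proof (cases "P w0 = 0")
  case True
  then show ?thesis by (rule Kpoly_schur[OF P w0 _ x])
next
  case False
  obtain Q where Q: "Q \<in> Kpoly" "Q (P w0) = w0"
    using Kpoly_transitive[OF Kpoly_Umin[OF P w0(1)] False w0(1)] by blast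
  have "P (Q w0) = w0" using Q Kpoly_commute[OF P Q(1)] by simp
  then have "omega1 w0 z0 = 0" using h[OF Kpoly_Umin[OF Q(1) w0(1)]] by simp
  then show ?thesis using z0 by simp
qed

lemma Kpoly_eq_on_Umin:
  assumes "P \<in> Kpoly" "Q \<in> Kpoly" "\<And>u. u \<in> Umin \<Longrightarrow> omega1 (P u) z0 = omega1 (Q u) z0"
    and "x \<in> Umin"
  shows "P x = Q x"
proof -
  have "(\<lambda>y. P y - Q y) x = 0"
    by (rule Kpoly_vanishing[OF Kpoly_diff[OF assms(1,2)] _ assms(4)])
      (simp add: omega_diff_l assms(3))
  then show ?thesis by simp
qed

text \<open>Choose a basis B of Umin and Pb b in Kpoly with Pb b w0 = b.  The system
  omega1(Pb b u, z0) = omega1(b, x), b in B, is uniquely solvable in Umin (injectivity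
  comes from Kpoly_vanishing), and the element P with P w0 = u then does the job.\<close>

lemma Px_exists: "\<exists>P\<in>Kpoly. \<forall>u\<in>Umin. omega1 (P u) z0 = omega1 u x"
proof -
  obtain B where B: "finite B" "B \<subseteq> Umin" "independent B" "span B = Umin"
    using basis_subspace_exists[OF Umin_subspace] by metis
  have "\<forall>b\<in>B. \<exists>P\<in>Kpoly. P w0 = b" using Kpoly_transitive[OF w0] B(2) by blast
  then obtain Pb where Pb: "\<And>b. b \<in> B \<Longrightarrow> Pb b \<in> Kpoly \<and> Pb b w0 = b" by metis
  have swap: "omega1 (Pb b u) z0 = omega1 (P b) z0" if "b \<in> B" "P \<in> Kpoly" "P w0 = u" for b P u
    using Pb[OF that(1)] Kpoly_commute[OF that(2), of "Pb b" w0] that(3) by simp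
  have extend: "omega1 (P y) z0 = f y"
    if "P \<in> Kpoly" "module_hom sc (*) f" "\<forall>b\<in>B. omega1 (P b) z0 = f b" "y \<in> Umin" for P f y
    using functional_eq_on_span[OF Kpoly_functional[OF that(1)] that(2)] that(3,4) B(4) by blast
  have "\<exists>u\<in>Umin. \<forall>b\<in>B. omega1 (Pb b u) z0 = omega1 b x"
  proof (rule solve_dual_system[OF Umin_subspace B])
    show "module_hom sc (*) (\<lambda>u. omega1 (Pb b u) z0)" if "b \<in> B" for b
      using Pb[OF that] Kpoly_functional by blast
    show "u = 0" if u: "u \<in> Umin" "\<forall>b\<in>B. omega1 (Pb b u) z0 = 0" for u
    proof -
      obtain Pu where Pu: "Pu \<in> Kpoly" "Pu w0 = u" using Kpoly_transitive[OF w0 u(1)] by blast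
      have "omega1 (Pu y) z0 = 0" if "y \<in> Umin" for y
        using extend[OF Pu(1) zero_functional _ that] u(2) swap[OF _ Pu] by simp
      then show "u = 0" using Kpoly_vanishing[OF Pu(1) _ w0(1)] Pu(2) by simp
    qed
  qed
  then obtain u where u: "u \<in> Umin" "\<forall>b\<in>B. omega1 (Pb b u) z0 = omega1 b x" by blast
  obtain Pu where Pu: "Pu \<in> Kpoly" "Pu w0 = u" using Kpoly_transitive[OF w0 u(1)] by blast
  have "omega1 (Pu y) z0 = omega1 y x" if "y \<in> Umin" for y
    using extend[OF Pu(1) omega1_linear_l _ that] u(2) swap[OF _ Pu] by simp
  then show ?thesis using Pu(1) by blast
qed

lemma Px: "Px x \<in> Kpoly" "u \<in> Umin \<Longrightarrow> omega1 (Px x u) z0 = omega1 u x"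
proof -
  have "\<exists>P. P \<in> Kpoly \<and> (\<forall>u\<in>Umin. omega1 (P u) z0 = omega1 u x)" using Px_exists[of x] by blast
  from someI_ex[OF this] show "Px x \<in> Kpoly" "u \<in> Umin \<Longrightarrow> omega1 (Px x u) z0 = omega1 u x"
    unfolding Px_def by blast+
qed

text \<open>Symmetry of Px for omega1: both sides equal omega1(Px x (Px y u), z0).\<close>

lemma Px_sym_omega1: "u \<in> Umin \<Longrightarrow> omega1 (Px x u) y = omega1 (Px y u) x"
  using Px(2)[OF Kpoly_Umin[OF Px(1)]] Kpoly_commute[OF Px(1) Px(1)] by metis

text \<open>Symmetry of Px for omega2, reduced to omega1 through A, which commutes with Px.\<close>

lemma Px_sym_omega2: "u \<in> Umin \<Longrightarrow> omega2 (Px x u) y = omega2 (Px y u) x"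
proof -
  assume u: "u \<in> Umin"
  have "omega2 (Px x u) y = omega1 (Px x (Aop u)) y"
    using Aop_omega[of "Px x u" y] Kpoly_commute_A[OF Px(1)] by simp
  also have "\<dots> = omega1 (Px y (Aop u)) x" by (rule Px_sym_omega1[OF Umin_A_closed[OF u]])
  also have "\<dots> = omega2 (Px y u) x"
    using Aop_omega[of "Px y u" x] Kpoly_commute_A[OF Px(1)] by simp
  finally show ?thesis .
qed

text \<open>Case (b): (Umin, Px) is a prolongation datum, and the iterates of Px z0 on w0 never
  vanish because Px z0 is non-zero at w0, hence (Schur) injective on Umin.\<close>

lemma nondegenerate_datum:
  shows "prolongation_datum sc br M1 M2 Umin Px"
    and "\<forall>n. (Px z0 ^^ n) w0 \<noteq> 0"
proof -
  show "prolongation_datum sc br M1 M2 Umin Px"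
  proof (intro prolongation_datum.intro depth2_gnla_dim2_axioms prolongation_datum_axioms.intro)
    show "Px (x + y) u = Px x u + Px y u" if "u \<in> Umin" for x y u
      by (rule Kpoly_eq_on_Umin[OF Px(1) K_add[OF Px(1) Px(1)] _ that])
        (simp add: Px(2) omega_add_l omega_add_r Kpoly_Umin[OF Px(1)])
    show "Px (sc c x) u = sc c (Px x u)" if "u \<in> Umin" for c x u
      by (rule Kpoly_eq_on_Umin[OF Px(1) K_scale[OF Px(1)] _ that])
        (simp add: Px(2) omega_scale_l omega_scale_r Kpoly_Umin[OF Px(1)])
    show "Px x u = 0" if "u \<in> Umin" "x \<in> M2" for x u
      by (rule Kpoly_vanishing[OF Px(1) _ that(1)]) (simp add: Px(2) omega_central[OF that(2)])
    show "br (Px x u) y = br (Px y u) x" if "u \<in> Umin" for x y u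
      using br_omega Px_sym_omega1[OF that] Px_sym_omega2[OF that] by metis
  qed (use Umin_subspace Umin_sub_M1 Kpoly_Umin Px(1) Kpoly_add Kpoly_scale Kpoly_commute in auto)
  have "Px z0 v \<noteq> 0" if "v \<in> Umin" "v \<noteq> 0" for v
  proof
    assume "Px z0 v = 0"
    then have "Px z0 w0 = 0" using Kpoly_schur[OF Px(1) that] w0 by blast
    then show False using Px(2)[OF w0(1), of z0] z0 by simp
  qed
  then have "(Px z0 ^^ n) w0 \<in> Umin \<and> (Px z0 ^^ n) w0 \<noteq> 0" for n
    by (induction n) (auto simp: w0 Kpoly_Umin[OF Px(1)])
  then show "\<forall>n. (Px z0 ^^ n) w0 \<noteq> 0" by blast
qed

end

theorem prolongation_infinite_dimensional:
  "infinite_dimensional (scale_fun sc) (tanaka_prolongation sc br M1 M2)"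
proof (cases "\<exists>v\<in>M1. v \<noteq> 0 \<and> (\<forall>y\<in>M1. omega1 v y = 0)")
  case True
  then obtain v where v: "v \<in> M1" "v \<noteq> 0" "\<And>y. y \<in> M1 \<Longrightarrow> omega1 v y = 0" by blast
  have "v \<in> span {v}" by (simp add: span_base)
  moreover obtain x0 where "\<forall>n. ((\<lambda>u. sc (omega2 v x0) u) ^^ n) v \<noteq> 0"
    using degenerate_datum(2)[OF v] by blast
  ultimately show ?thesis
    using prolongation_datum.infinite_dimensional_if_nonvanishing[OF degenerate_datum(1)[OF v]]
    by blast
next
  case False
  then have nondeg_omega1: "\<And>v. v \<in> M1 \<Longrightarrow> \<forall>y\<in>M1. omega1 v y = 0 \<Longrightarrow> v = 0" by blast
  show ?thesis
    using prolongation_datum.infinite_dimensional_if_nonvanishing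
      [OF nondegenerate_datum(1)[OF nondeg_omega1] w0(1)[OF nondeg_omega1]]
      nondegenerate_datum(2)[OF nondeg_omega1] by blast
qed

end

theorem mainTheorem6:
  fixes sc :: "'k::field_char_0 \<Rightarrow> 'a::ab_group_add \<Rightarrow> 'a"
    and br :: "'a \<Rightarrow> 'a \<Rightarrow> 'a"
    and M1 M2 :: "'a set"
  assumes "depth2_gnla sc br M1 M2"
    and "non_degenerate br M1"
    and "vector_space.dim sc M2 = 2"
  shows "infinite_dimensional (scale_fun sc) (tanaka_prolongation sc br M1 M2)"
proof -
  interpret depth2_gnla_dim2 sc br M1 M2
    using assms by unfold_locales
  show ?thesis by (rule prolongation_infinite_dimensional)
qed

end
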